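(* Let $m,n\ge 1$, let $0\le\theta\le 1$, let $0<p<1$, let $\lambda>0$, and let $\mathbf{Y}\in\mathbb{R}^{m\times n}$ have full singular value decomposition $\mathbf{Y}=\mathbf{U}\mathbf{\Sigma}\mathbf{V}^\mathsf{T}$ with $\mathbf{\Sigma}=\mathrm{diag}(\sigma_1,\sigma_2,\ldots,\sigma_{\min\{m,n\}})$, $\sigma_1\ge\sigma_2\ge\cdots\ge\sigma_{\min\{m,n\}}\ge 0$. Put $r=\lceil\theta\cdot\min\{m,n\}\rceil$. Then the optimal solution of $$\min_{\mathbf{M}\in\mathbb{R}^{m\times n}}\ \lambda\Vert\mathbf{M}\Vert_{\theta,S_p}^p+\frac{1}{2}\Vert\mathbf{M}-\mathbf{Y}\Vert_F^2$$ is given by $\mathbf{M}_{opt}=\mathbf{U}\mathbf{\Delta}\mathbf{V}^\mathsf{T}$, where $\mathbf{\Delta}=\mathrm{diag}(\sigma_1,\ldots,\sigma_r,\delta_{r+1},\ldots,\delta_{\min\{m,n\}})$ is arranged in the same (non-ascending) order as $\mathbf{\Sigma}$, and the diagonal entries $\delta_i$ ($i>r$) are given by the problem $$\min_{\delta_i\ge 0}\ \sum_{i=r+1}^{\min\{m,n\}}\Big(\lambda\delta_i^p+\tfrac{1}{2}(\delta_i-\sigma_i)^2\Big)\quad\text{s.t. } \delta_i\ge\delta_j \text{ for } i\le j,\ i,j\in\{r+1,\ldots,\min\{m,n\}\}.$$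
   Context: For a matrix $\mathbf{M}\in\mathbb{R}^{m\times n}$ with singular values $\sigma_1(\mathbf{M})\ge\cdots\ge\sigma_{\min\{m,n\}}(\mathbf{M})\ge0$, a truncation rate $\theta\in[0,1]$ and $r=\lceil\theta\cdot\min\{m,n\}\rceil$ (smallest integer not less than $\theta\min\{m,n\}$), the $p$-th power of the truncated Schatten $p$-norm is $\Vert\mathbf{M}\Vert_{\theta,S_p}^p=\sum_{i=r+1}^{\min\{m,n\}}\sigma_i(\mathbf{M})^p$, i.e. only the smallest $\min\{m,n\}-r$ singular values contribute. $\Vert\cdot\Vert_F$ is the Frobenius norm. *)

theory Defs
  imports "Jordan_Normal_Form.Matrix" Complex_Main
begin

text \<open>Matrices are Jordan_Normal_Form matrices; rows/columns and diagonal
  positions are indexed from 0, so the paper's index i corresponds to i - 1 here.\<close>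

definition orthogonal_mat :: "nat \<Rightarrow> real mat \<Rightarrow> bool" where
  "orthogonal_mat k U \<longleftrightarrow> U \<in> carrier_mat k k \<and> U * transpose_mat U = 1\<^sub>m k"

definition rdiag :: "nat \<Rightarrow> nat \<Rightarrow> (nat \<Rightarrow> real) \<Rightarrow> real mat" where
  "rdiag m n d = mat m n (\<lambda>(i, j). if i = j then d i else 0)"

definition is_svd :: "nat \<Rightarrow> nat \<Rightarrow> real mat \<Rightarrow> real mat \<Rightarrow> (nat \<Rightarrow> real) \<Rightarrow> real mat \<Rightarrow> bool" where
  "is_svd m n Y U s V \<longleftrightarrow>
     Y \<in> carrier_mat m n \<and> orthogonal_mat m U \<and> orthogonal_mat n V \<and>
     (\<forall>i < min m n. 0 \<le> s i) \<and>
     (\<forall>i j. i \<le> j \<and> j < min m n \<longrightarrow> s j \<le> s i) \<and>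
     Y = U * rdiag m n s * transpose_mat V"

definition sing_vals :: "real mat \<Rightarrow> nat \<Rightarrow> real" where
  "sing_vals M = (SOME s. (\<forall>i \<ge> min (dim_row M) (dim_col M). s i = 0) \<and>
                     (\<exists>U V. is_svd (dim_row M) (dim_col M) M U s V))"

definition trunc_rank :: "real \<Rightarrow> nat \<Rightarrow> nat \<Rightarrow> nat" where
  "trunc_rank \<theta> m n = nat \<lceil>\<theta> * real (min m n)\<rceil>"

definition trunc_schatten_pow :: "real \<Rightarrow> real \<Rightarrow> real mat \<Rightarrow> real" where
  "trunc_schatten_pow \<theta> p M =
     (let k = min (dim_row M) (dim_col M); r = trunc_rank \<theta> (dim_row M) (dim_col M)
      in \<Sum>i\<in>{r..<k}. sing_vals M i powr p)"

definition frob_norm :: "real mat \<Rightarrow> real" where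
  "frob_norm M = sqrt (\<Sum>i<dim_row M. \<Sum>j<dim_col M. (M $$ (i, j))\<^sup>2)"

end

theory Submission
  imports Defs "Jordan_Normal_Form.Determinant" "HOL-Analysis.Function_Topology"
begin

text \<open>By von Neumann's trace inequality the Frobenius inner product of two matrices is at most the
  sum of the products of their ordered singular values; hence \<open>\<parallel>M - Y\<parallel>\<^sub>F\<^sup>2\<close> is at
  least \<open>\<Sum>\<^sub>k (\<sigma>\<^sub>k(M) - \<sigma>\<^sub>k(Y))\<^sup>2\<close> (Mirsky), with equality when \<open>M\<close> and \<open>Y\<close> share
  singular vectors.  So the objective at any \<open>M\<close> is at least the objective of the diagonal
  problem at the tail of the singular values of \<open>M\<close>, which is feasible, and thus at least its
  optimum \<open>\<delta>\<close>.  An optimal \<open>\<delta>\<close> never exceeds \<open>\<sigma>\<close>, since clipping it at \<open>\<sigma>\<close> stays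
  feasible and strictly decreases \<open>\<lambda> \<delta>\<^sub>i\<^sup>p\<close> wherever it acts.  Therefore the candidate
  diagonal is nonincreasing, the candidate is in SVD form with the singular vectors of \<open>Y\<close>,
  and its objective equals that optimum.

  The trace inequality reduces to a rearrangement inequality for doubly substochastic weights.
  Singular values are well defined because an SVD exists (built greedily by maximising
  \<open>x\<^sup>T B y\<close> over unit spheres and deflating with Householder reflections) and its diagonal is
  unique (Mirsky's inequality for \<open>M = Y\<close>).\<close>

section \<open>Orthogonal matrices and the Frobenius inner product\<close>

lemma sum_swap_outer_pair:
  "(\<Sum>i\<in>A. \<Sum>j\<in>B. \<Sum>k\<in>C. \<Sum>l\<in>D. f i j k l) = (\<Sum>k\<in>C. \<Sum>l\<in>D. \<Sum>i\<in>A. \<Sum>j\<in>B. f i j k l)"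
proof -
  have "(\<Sum>i\<in>A. \<Sum>j\<in>B. \<Sum>k\<in>C. \<Sum>l\<in>D. f i j k l) = (\<Sum>i\<in>A. \<Sum>k\<in>C. \<Sum>j\<in>B. \<Sum>l\<in>D. f i j k l)"
    by (rule sum.cong[OF refl], rule sum.swap)
  also have "\<dots> = (\<Sum>k\<in>C. \<Sum>i\<in>A. \<Sum>l\<in>D. \<Sum>j\<in>B. f i j k l)"
    by (subst sum.swap) (rule sum.cong[OF refl], rule sum.cong[OF refl], rule sum.swap)
  also have "\<dots> = (\<Sum>k\<in>C. \<Sum>l\<in>D. \<Sum>i\<in>A. \<Sum>j\<in>B. f i j k l)"
    by (rule sum.cong[OF refl], rule sum.swap)
  finally show ?thesis .
qed

lemma index_mult_mat_sum:
  assumes "A \<in> carrier_mat a b" "B \<in> carrier_mat b c" "i < a" "j < c"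
  shows "(A * B) $$ (i, j) = (\<Sum>l<b. A $$ (i, l) * B $$ (l, j))"
  using assms by (auto simp: scalar_prod_def atLeast0LessThan intro!: sum.cong)

lemma index_transpose_mult_sum:
  assumes "A \<in> carrier_mat k a" "B \<in> carrier_mat k b" "i < a" "j < b"
  shows "(transpose_mat A * B) $$ (i, j) = (\<Sum>l<k. A $$ (l, i) * B $$ (l, j))"
  using assms by (subst index_mult_mat_sum[of _ a k _ b]) auto

lemma orthogonal_mat_carrier: "orthogonal_mat k U \<Longrightarrow> U \<in> carrier_mat k k"
  by (simp add: orthogonal_mat_def)

lemma orthogonal_mat_transpose_mult: "orthogonal_mat k U \<Longrightarrow> transpose_mat U * U = 1\<^sub>m k"
  unfolding orthogonal_mat_def by (rule mat_mult_left_right_inverse[of U k]) auto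

lemma orthogonal_mat_transpose: "orthogonal_mat k U \<Longrightarrow> orthogonal_mat k (transpose_mat U)"
  using orthogonal_mat_transpose_mult[of k U] by (simp add: orthogonal_mat_def)

lemma orthogonal_mat_one: "orthogonal_mat k (1\<^sub>m k)"
  by (simp add: orthogonal_mat_def)

lemma orthogonal_mat_mult:
  assumes "orthogonal_mat k U" "orthogonal_mat k H"
  shows "orthogonal_mat k (U * H)"
proof -
  have U: "U \<in> carrier_mat k k" and H: "H \<in> carrier_mat k k"
    using assms by (auto simp: orthogonal_mat_def)
  have "(U * H) * transpose_mat (U * H) = U * (H * transpose_mat H) * transpose_mat U"
    using U H by (simp add: transpose_mult[OF U H] assoc_mult_mat[of _ k k _ k _ k])
  also have "\<dots> = 1\<^sub>m k" using assms U by (simp add: orthogonal_mat_def)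
  finally show ?thesis using U H by (simp add: orthogonal_mat_def)
qed

lemma orthogonal_mat_rows:
  assumes "orthogonal_mat k U" "i < k" "j < k"
  shows "(\<Sum>l<k. U $$ (i, l) * U $$ (j, l)) = (if i = j then 1 else 0)"
proof -
  have U: "U \<in> carrier_mat k k" using assms by (simp add: orthogonal_mat_def)
  have "(\<Sum>l<k. U $$ (i, l) * U $$ (j, l)) = (U * transpose_mat U) $$ (i, j)"
    using U assms by (subst index_mult_mat_sum[of _ k k _ k]) (auto intro!: sum.cong)
  then show ?thesis using assms by (simp add: orthogonal_mat_def)
qed

lemma orthogonal_mat_cols:
  assumes "orthogonal_mat k U" "i < k" "j < k"
  shows "(\<Sum>l<k. U $$ (l, i) * U $$ (l, j)) = (if i = j then 1 else 0)"
  using orthogonal_mat_rows[OF orthogonal_mat_transpose[OF assms(1)] assms(2,3)]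
    orthogonal_mat_carrier[OF assms(1)] assms(2,3)
  by simp

lemma orthogonal_mat_row_sq_sum_le:
  assumes "orthogonal_mat k X" "i < k" "K \<le> k"
  shows "(\<Sum>l<K. (X $$ (i, l))\<^sup>2) \<le> 1"
proof -
  have "(\<Sum>l<K. (X $$ (i, l))\<^sup>2) \<le> (\<Sum>l<k. (X $$ (i, l))\<^sup>2)"
    by (rule sum_mono2) (use assms(3) in auto)
  also have "\<dots> = 1"
    using orthogonal_mat_rows[OF assms(1,2,2)] by (simp add: power2_eq_square)
  finally show ?thesis .
qed

lemma orthogonal_mat_col_sq_sum_le:
  assumes "orthogonal_mat k X" "i < k" "K \<le> k"
  shows "(\<Sum>l<K. (X $$ (l, i))\<^sup>2) \<le> 1"
proof -
  have "(\<Sum>l<K. (X $$ (l, i))\<^sup>2) = (\<Sum>l<K. (transpose_mat X $$ (i, l))\<^sup>2)"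
    using orthogonal_mat_carrier[OF assms(1)] assms(2,3) by (intro sum.cong) auto
  also have "\<dots> \<le> 1"
    by (rule orthogonal_mat_row_sq_sum_le[OF orthogonal_mat_transpose[OF assms(1)] assms(2,3)])
  finally show ?thesis .
qed

lemma rdiag_carrier[simp]: "rdiag m n a \<in> carrier_mat m n"
  by (simp add: rdiag_def)

lemma rdiag_cong: "(\<And>i. i < min m n \<Longrightarrow> a i = b i) \<Longrightarrow> rdiag m n a = rdiag m n b"
  unfolding rdiag_def by (intro eq_matI) auto

lemma index_svd_form:
  assumes U: "U \<in> carrier_mat m m" and V: "V \<in> carrier_mat n n" and i: "i < m" and j: "j < n"
  shows "(U * rdiag m n a * transpose_mat V) $$ (i, j) = (\<Sum>k<min m n. U $$ (i, k) * a k * V $$ (j, k))"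
proof -
  have UR: "(U * rdiag m n a) $$ (i, l) = (if l < m then U $$ (i, l) * a l else 0)" if l: "l < n" for l
  proof -
    have "(U * rdiag m n a) $$ (i, l) = (\<Sum>k<m. U $$ (i, k) * rdiag m n a $$ (k, l))"
      using U i l by (simp add: index_mult_mat_sum[of _ m m _ n])
    also have "\<dots> = (\<Sum>k<m. if k = l then U $$ (i, l) * a l else 0)"
      using l by (intro sum.cong) (auto simp: rdiag_def)
    finally show ?thesis by (simp add: sum.delta')
  qed
  have "(U * rdiag m n a * transpose_mat V) $$ (i, j)
      = (\<Sum>l<n. if l < m then U $$ (i, l) * a l * V $$ (j, l) else 0)"
    using U V i j by (subst index_mult_mat_sum[of _ m n _ n]) (auto simp: UR intro!: sum.cong)
  also have "\<dots> = (\<Sum>l\<in>{l\<in>{..<n}. l < m}. U $$ (i, l) * a l * V $$ (j, l))"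
    by (rule sum.inter_filter[symmetric]) simp
  also have "{l\<in>{..<n}. l < m} = {..<min m n}" by auto
  finally show ?thesis .
qed

definition frob_inner :: "real mat \<Rightarrow> real mat \<Rightarrow> real" where
  "frob_inner A B = (\<Sum>i<dim_row A. \<Sum>j<dim_col A. A $$ (i, j) * B $$ (i, j))"

lemma frob_norm_diff_sq:
  assumes "A \<in> carrier_mat m n" "B \<in> carrier_mat m n"
  shows "(frob_norm (A - B))\<^sup>2 = frob_inner A A - 2 * frob_inner A B + frob_inner B B"
proof -
  have "(frob_norm (A - B))\<^sup>2 = (\<Sum>i<m. \<Sum>j<n. ((A - B) $$ (i, j))\<^sup>2)"
    unfolding frob_norm_def using assms by (simp add: sum_nonneg)
  also have "\<dots> = (\<Sum>i<m. \<Sum>j<n. A $$ (i, j) * A $$ (i, j) - 2 * (A $$ (i, j) * B $$ (i, j))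
                                  + B $$ (i, j) * B $$ (i, j))"
    using assms by (intro sum.cong refl) (simp add: power2_eq_square algebra_simps)
  also have "\<dots> = frob_inner A A - 2 * frob_inner A B + frob_inner B B"
    unfolding frob_inner_def using assms by (simp add: sum.distrib sum_subtractf sum_distrib_left)
  finally show ?thesis .
qed

lemma frob_inner_svd_form:
  assumes U1: "U1 \<in> carrier_mat m m" and V1: "V1 \<in> carrier_mat n n"
    and U2: "U2 \<in> carrier_mat m m" and V2: "V2 \<in> carrier_mat n n"
  shows "frob_inner (U1 * rdiag m n a * transpose_mat V1) (U2 * rdiag m n b * transpose_mat V2)
    = (\<Sum>k<min m n. \<Sum>l<min m n. a k * b l
         * (transpose_mat U1 * U2) $$ (k, l) * (transpose_mat V1 * V2) $$ (k, l))"
proof -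
  let ?K = "{..<min m n}"
  have "frob_inner (U1 * rdiag m n a * transpose_mat V1) (U2 * rdiag m n b * transpose_mat V2)
      = (\<Sum>i<m. \<Sum>j<n. (\<Sum>k\<in>?K. U1 $$ (i, k) * a k * V1 $$ (j, k))
                       * (\<Sum>l\<in>?K. U2 $$ (i, l) * b l * V2 $$ (j, l)))"
    unfolding frob_inner_def using U1 V1 U2 V2
    by (intro sum.cong) (auto simp del: index_mult_mat(1) simp add: index_svd_form)
  also have "\<dots> = (\<Sum>i<m. \<Sum>j<n. \<Sum>k\<in>?K. \<Sum>l\<in>?K.
                     a k * b l * (U1 $$ (i, k) * U2 $$ (i, l)) * (V1 $$ (j, k) * V2 $$ (j, l)))"
    by (simp add: sum_product mult_ac)
  also have "\<dots> = (\<Sum>k\<in>?K. \<Sum>l\<in>?K. \<Sum>i<m. \<Sum>j<n.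
                     a k * b l * (U1 $$ (i, k) * U2 $$ (i, l)) * (V1 $$ (j, k) * V2 $$ (j, l)))"
    by (rule sum_swap_outer_pair)
  also have "\<dots> = (\<Sum>k\<in>?K. \<Sum>l\<in>?K. a k * b l
                     * (\<Sum>i<m. U1 $$ (i, k) * U2 $$ (i, l)) * (\<Sum>j<n. V1 $$ (j, k) * V2 $$ (j, l)))"
    by (simp add: sum_distrib_left sum_distrib_right mult_ac)
  also have "\<dots> = (\<Sum>k\<in>?K. \<Sum>l\<in>?K. a k * b l
                     * (transpose_mat U1 * U2) $$ (k, l) * (transpose_mat V1 * V2) $$ (k, l))"
    by (intro sum.cong refl) (simp del: index_mult_mat(1)
        add: index_transpose_mult_sum[OF U1 U2] index_transpose_mult_sum[OF V1 V2])
  finally show ?thesis .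
qed

lemma frob_inner_same_frame:
  assumes U: "orthogonal_mat m U" and V: "orthogonal_mat n V"
  shows "frob_inner (U * rdiag m n a * transpose_mat V) (U * rdiag m n b * transpose_mat V)
     = (\<Sum>k<min m n. a k * b k)"
  using orthogonal_mat_carrier[OF U] orthogonal_mat_carrier[OF V]
  by (simp add: frob_inner_svd_form orthogonal_mat_transpose_mult[OF U]
      orthogonal_mat_transpose_mult[OF V] if_distrib cong: if_cong)

section \<open>The von Neumann trace inequality\<close>

lemma nonincreasing_layer_decomposition:
  fixes a :: "nat \<Rightarrow> real"
  assumes nonneg: "\<forall>k<K. 0 \<le> a k" and mono: "\<forall>i j. i \<le> j \<and> j < K \<longrightarrow> a j \<le> a i"
  obtains D where "\<forall>t<K. 0 \<le> D t" "\<forall>k<K. a k = (\<Sum>t<K. if k \<le> t then D t else 0)"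
proof
  define a' where "a' t = (if t < K then a t else 0)" for t
  show "\<forall>t<K. 0 \<le> a' t - a' (Suc t)"
    using nonneg mono by (auto simp: a'_def)
  show "\<forall>k<K. a k = (\<Sum>t<K. if k \<le> t then a' t - a' (Suc t) else 0)"
  proof (intro allI impI)
    fix k assume k: "k < K"
    have "(\<Sum>t<K. if k \<le> t then a' t - a' (Suc t) else 0) = (\<Sum>t\<in>{t\<in>{..<K}. k \<le> t}. a' t - a' (Suc t))"
      by (rule sum.inter_filter[symmetric]) simp
    also have "{t\<in>{..<K}. k \<le> t} = {k..<K}" by auto
    also have "(\<Sum>t\<in>{k..<K}. a' t - a' (Suc t)) = - (\<Sum>t\<in>{k..<K}. a' (Suc t) - a' t)"
      by (simp add: sum_negf[symmetric])
    also have "\<dots> = a k" using k by (subst sum_Suc_diff') (auto simp: a'_def)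
    finally show "a k = (\<Sum>t<K. if k \<le> t then a' t - a' (Suc t) else 0)" ..
  qed
qed

lemma double_sum_layer_identity:
  fixes a b D E :: "nat \<Rightarrow> real"
  assumes "\<forall>k<K. a k = (\<Sum>t<K. if k \<le> t then D t else 0)"
    and "\<forall>l<K. b l = (\<Sum>s<K. if l \<le> s then E s else 0)"
  shows "(\<Sum>k<K. \<Sum>l<K. a k * b l * W k l)
       = (\<Sum>t<K. \<Sum>s<K. D t * E s * (\<Sum>k<K. \<Sum>l<K. if k \<le> t \<and> l \<le> s then W k l else 0))"
proof -
  have "(\<Sum>k<K. \<Sum>l<K. a k * b l * W k l)
      = (\<Sum>k<K. \<Sum>l<K. (\<Sum>t<K. if k \<le> t then D t else 0) * (\<Sum>s<K. if l \<le> s then E s else 0) * W k l)"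
    using assms by simp
  also have "\<dots> = (\<Sum>k<K. \<Sum>l<K. \<Sum>t<K. \<Sum>s<K.
                    (if k \<le> t then D t else 0) * (if l \<le> s then E s else 0) * W k l)"
    unfolding sum_product by (simp add: sum_distrib_right)
  also have "\<dots> = (\<Sum>k<K. \<Sum>l<K. \<Sum>t<K. \<Sum>s<K. D t * E s * (if k \<le> t \<and> l \<le> s then W k l else 0))"
    by (intro sum.cong refl) simp
  also have "\<dots> = (\<Sum>t<K. \<Sum>s<K. \<Sum>k<K. \<Sum>l<K. D t * E s * (if k \<le> t \<and> l \<le> s then W k l else 0))"
    by (rule sum_swap_outer_pair)
  finally show ?thesis by (simp add: sum_distrib_left)
qed

lemma row_substochastic_corner_sum_le:
  fixes W :: "nat \<Rightarrow> nat \<Rightarrow> real"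
  assumes nonneg: "\<forall>k<K. \<forall>l<K. 0 \<le> W k l" and rows: "\<forall>k<K. (\<Sum>l<K. W k l) \<le> 1"
    and "t \<le> s"
  shows "(\<Sum>k<K. \<Sum>l<K. if k \<le> t \<and> l \<le> s then W k l else 0) \<le> (\<Sum>k<K. if k \<le> t then 1 else 0)"
proof (rule sum_mono)
  fix k assume k: "k \<in> {..<K}"
  have "(\<Sum>l<K. if k \<le> t \<and> l \<le> s then W k l else 0) \<le> (\<Sum>l<K. if k \<le> t then W k l else 0)"
    using nonneg k by (intro sum_mono) auto
  also have "\<dots> \<le> (if k \<le> t then 1 else 0)" using rows k by auto
  finally show "(\<Sum>l<K. if k \<le> t \<and> l \<le> s then W k l else 0) \<le> (if k \<le> t then 1 else 0)" .
qed

lemma substochastic_corner_sum_le: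
  fixes W :: "nat \<Rightarrow> nat \<Rightarrow> real"
  assumes nonneg: "\<forall>k<K. \<forall>l<K. 0 \<le> W k l"
    and rows: "\<forall>k<K. (\<Sum>l<K. W k l) \<le> 1" and cols: "\<forall>l<K. (\<Sum>k<K. W k l) \<le> 1"
  shows "(\<Sum>k<K. \<Sum>l<K. if k \<le> t \<and> l \<le> s then W k l else 0)
       \<le> (\<Sum>k<K. \<Sum>l<K. if k \<le> t \<and> l \<le> s then (if k = l then 1 else 0) else 0)"
proof -
  have diag: "(\<Sum>l<K. if k \<le> t \<and> l \<le> s then (if k = l then 1 else 0) else 0)
      = (if k \<le> t \<and> k \<le> s then 1 else (0::real))" if "k < K" for k
  proof -
    have "(\<Sum>l<K. if k \<le> t \<and> l \<le> s then (if k = l then 1 else 0) else 0)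
        = (\<Sum>l<K. if l = k then (if k \<le> t \<and> k \<le> s then 1 else 0) else (0::real))"
      by (intro sum.cong) auto
    then show ?thesis using that by simp
  qed
  have "(\<Sum>k<K. \<Sum>l<K. if k \<le> t \<and> l \<le> s then W k l else 0) \<le> (\<Sum>k<K. if k \<le> t \<and> k \<le> s then 1 else 0)"
  proof (cases "t \<le> s")
    case True
    have "(\<Sum>k<K. if k \<le> t \<and> k \<le> s then 1 else 0) = (\<Sum>k<K. if k \<le> t then 1 else (0::real))"
      using True by (intro sum.cong) auto
    then show ?thesis using row_substochastic_corner_sum_le[OF nonneg rows True] by simp
  next
    case False
    have "(\<Sum>k<K. \<Sum>l<K. if k \<le> t \<and> l \<le> s then W k l else 0)
        = (\<Sum>l<K. \<Sum>k<K. if l \<le> s \<and> k \<le> t then W k l else 0)"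
      by (subst sum.swap) (simp add: conj_commute)
    also have "\<dots> \<le> (\<Sum>l<K. if l \<le> s then 1 else 0)"
      using False by (intro row_substochastic_corner_sum_le) (use nonneg cols in auto)
    also have "\<dots> = (\<Sum>k<K. if k \<le> t \<and> k \<le> s then 1 else 0)"
      using False by (intro sum.cong) auto
    finally show ?thesis .
  qed
  then show ?thesis by (simp add: diag)
qed

text \<open>A bilinear form with doubly substochastic weights is maximised on the diagonal by
  nonincreasing nonnegative vectors: write both as nonnegative combinations of the
  indicator vectors of initial segments, for which the claim is the corner bound.\<close>

lemma substochastic_rearrangement:
  fixes a b :: "nat \<Rightarrow> real" and W :: "nat \<Rightarrow> nat \<Rightarrow> real"
  assumes a0: "\<forall>k<K. 0 \<le> a k" and b0: "\<forall>k<K. 0 \<le> b k"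
    and a_mono: "\<forall>i j. i \<le> j \<and> j < K \<longrightarrow> a j \<le> a i"
    and b_mono: "\<forall>i j. i \<le> j \<and> j < K \<longrightarrow> b j \<le> b i"
    and W0: "\<forall>k<K. \<forall>l<K. 0 \<le> W k l"
    and rows: "\<forall>k<K. (\<Sum>l<K. W k l) \<le> 1" and cols: "\<forall>l<K. (\<Sum>k<K. W k l) \<le> 1"
  shows "(\<Sum>k<K. \<Sum>l<K. a k * b l * W k l) \<le> (\<Sum>k<K. a k * b k)"
proof -
  obtain D where D0: "\<forall>t<K. 0 \<le> D t" and aD: "\<forall>k<K. a k = (\<Sum>t<K. if k \<le> t then D t else 0)"
    using nonincreasing_layer_decomposition[OF a0 a_mono] .
  obtain E where E0: "\<forall>t<K. 0 \<le> E t" and bE: "\<forall>k<K. b k = (\<Sum>t<K. if k \<le> t then E t else 0)"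
    using nonincreasing_layer_decomposition[OF b0 b_mono] .
  have "(\<Sum>k<K. \<Sum>l<K. a k * b l * W k l)
      = (\<Sum>t<K. \<Sum>s<K. D t * E s * (\<Sum>k<K. \<Sum>l<K. if k \<le> t \<and> l \<le> s then W k l else 0))"
    by (rule double_sum_layer_identity[OF aD bE])
  also have "\<dots> \<le> (\<Sum>t<K. \<Sum>s<K. D t * E s
                 * (\<Sum>k<K. \<Sum>l<K. if k \<le> t \<and> l \<le> s then (if k = l then 1 else 0) else 0))"
    using D0 E0 by (intro sum_mono mult_left_mono substochastic_corner_sum_le[OF W0 rows cols]) auto
  also have "\<dots> = (\<Sum>k<K. \<Sum>l<K. a k * b l * (if k = l then 1 else 0))"
    by (rule double_sum_layer_identity[OF aD bE, symmetric])
  also have "\<dots> = (\<Sum>k<K. \<Sum>l<K. if l = k then a k * b k else 0)"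
    by (intro sum.cong) auto
  finally show ?thesis by simp
qed

lemma von_neumann_trace_inequality:
  assumes U1: "orthogonal_mat m U1" and V1: "orthogonal_mat n V1"
    and U2: "orthogonal_mat m U2" and V2: "orthogonal_mat n V2"
    and a0: "\<forall>k<min m n. 0 \<le> a k" and b0: "\<forall>k<min m n. 0 \<le> b k"
    and a_mono: "\<forall>i j. i \<le> j \<and> j < min m n \<longrightarrow> a j \<le> a i"
    and b_mono: "\<forall>i j. i \<le> j \<and> j < min m n \<longrightarrow> b j \<le> b i"
  shows "frob_inner (U1 * rdiag m n a * transpose_mat V1) (U2 * rdiag m n b * transpose_mat V2)
     \<le> (\<Sum>k<min m n. a k * b k)"
proof -
  let ?K = "min m n"
  define P where "P = transpose_mat U1 * U2"
  define Q where "Q = transpose_mat V1 * V2"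
  define W where "W k l = ((P $$ (k, l))\<^sup>2 + (Q $$ (k, l))\<^sup>2) / 2" for k l
  have P: "orthogonal_mat m P" and Q: "orthogonal_mat n Q"
    unfolding P_def Q_def using U1 U2 V1 V2 by (auto intro: orthogonal_mat_mult orthogonal_mat_transpose)
  have "frob_inner (U1 * rdiag m n a * transpose_mat V1) (U2 * rdiag m n b * transpose_mat V2)
      = (\<Sum>k<?K. \<Sum>l<?K. a k * b l * (P $$ (k, l) * Q $$ (k, l)))"
    unfolding P_def Q_def using U1 V1 U2 V2
    by (simp add: frob_inner_svd_form orthogonal_mat_carrier mult.assoc)
  also have "\<dots> \<le> (\<Sum>k<?K. \<Sum>l<?K. a k * b l * W k l)"
  proof (intro sum_mono mult_left_mono)
    fix k l assume "k \<in> {..<?K}" "l \<in> {..<?K}"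
    then show "0 \<le> a k * b l" using a0 b0 by simp
    show "P $$ (k, l) * Q $$ (k, l) \<le> W k l"
      unfolding W_def using sum_squares_bound[of "P $$ (k, l)" "Q $$ (k, l)"] by simp
  qed
  also have "\<dots> \<le> (\<Sum>k<?K. a k * b k)"
  proof (rule substochastic_rearrangement[OF a0 b0 a_mono b_mono])
    show "\<forall>k<?K. \<forall>l<?K. 0 \<le> W k l" by (simp add: W_def)
    show "\<forall>k<?K. (\<Sum>l<?K. W k l) \<le> 1"
    proof (intro allI impI)
      fix k assume "k < ?K"
      then have "(\<Sum>l<?K. (P $$ (k, l))\<^sup>2) \<le> 1" "(\<Sum>l<?K. (Q $$ (k, l))\<^sup>2) \<le> 1"
        by (auto intro: orthogonal_mat_row_sq_sum_le[OF P] orthogonal_mat_row_sq_sum_le[OF Q])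
      then show "(\<Sum>l<?K. W k l) \<le> 1" by (simp add: W_def sum_divide_distrib[symmetric] sum.distrib)
    qed
    show "\<forall>l<?K. (\<Sum>k<?K. W k l) \<le> 1"
    proof (intro allI impI)
      fix l assume "l < ?K"
      then have "(\<Sum>k<?K. (P $$ (k, l))\<^sup>2) \<le> 1" "(\<Sum>k<?K. (Q $$ (k, l))\<^sup>2) \<le> 1"
        by (auto intro: orthogonal_mat_col_sq_sum_le[OF P] orthogonal_mat_col_sq_sum_le[OF Q])
      then show "(\<Sum>k<?K. W k l) \<le> 1" by (simp add: W_def sum_divide_distrib[symmetric] sum.distrib)
    qed
  qed
  finally show ?thesis .
qed

lemma is_svdD:
  assumes "is_svd m n M U s V"
  shows "M \<in> carrier_mat m n" "orthogonal_mat m U" "orthogonal_mat n V"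
    "\<forall>i<min m n. 0 \<le> s i" "\<forall>i j. i \<le> j \<and> j < min m n \<longrightarrow> s j \<le> s i"
    "M = U * rdiag m n s * transpose_mat V"
  using assms by (auto simp: is_svd_def)

lemma sum_sq_diff_expand:
  fixes a b :: "nat \<Rightarrow> real"
  shows "(\<Sum>k\<in>A. (a k - b k)\<^sup>2) = (\<Sum>k\<in>A. a k * a k) - 2 * (\<Sum>k\<in>A. a k * b k) + (\<Sum>k\<in>A. b k * b k)"
  by (simp add: power2_eq_square algebra_simps sum.distrib sum_subtractf sum_distrib_left)

lemma mirsky_inequality:
  assumes A: "is_svd m n M U1 a V1" and B: "is_svd m n Y U2 b V2"
  shows "(\<Sum>k<min m n. (a k - b k)\<^sup>2) \<le> (frob_norm (M - Y))\<^sup>2"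
proof -
  note sa = is_svdD[OF A] and sb = is_svdD[OF B]
  have "frob_inner M M = (\<Sum>k<min m n. a k * a k)"
    using frob_inner_same_frame[OF sa(2,3)] sa(6) by metis
  moreover have "frob_inner Y Y = (\<Sum>k<min m n. b k * b k)"
    using frob_inner_same_frame[OF sb(2,3)] sb(6) by metis
  moreover have "frob_inner M Y \<le> (\<Sum>k<min m n. a k * b k)"
    using von_neumann_trace_inequality[OF sa(2,3) sb(2,3) sa(4) sb(4) sa(5) sb(5)] sa(6) sb(6) by metis
  ultimately show ?thesis
    using frob_norm_diff_sq[OF sa(1) sb(1)] sum_sq_diff_expand[of a b "{..<min m n}"] by linarith
qed

lemma frob_norm_diff_same_frame:
  assumes U: "orthogonal_mat m U" and V: "orthogonal_mat n V"
  shows "(frob_norm (U * rdiag m n a * transpose_mat V - U * rdiag m n b * transpose_mat V))\<^sup>2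
     = (\<Sum>k<min m n. (a k - b k)\<^sup>2)"
proof -
  have "U * rdiag m n a * transpose_mat V \<in> carrier_mat m n" "U * rdiag m n b * transpose_mat V \<in> carrier_mat m n"
    using orthogonal_mat_carrier[OF U] orthogonal_mat_carrier[OF V] by auto
  then show ?thesis
    by (simp add: frob_norm_diff_sq frob_inner_same_frame[OF U V] sum_sq_diff_expand)
qed

lemma is_svd_diag_unique:
  assumes "is_svd m n M U a V" "is_svd m n M U' b V'" "k < min m n"
  shows "a k = b k"
proof -
  have "(\<Sum>k<min m n. (a k - b k)\<^sup>2) \<le> 0"
    using mirsky_inequality[OF assms(1,2)] is_svdD(1)[OF assms(1)] by (simp add: frob_norm_def)
  then have "(\<Sum>k<min m n. (a k - b k)\<^sup>2) = 0"
    by (simp add: order_antisym sum_nonneg)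
  then have "\<forall>k\<in>{..<min m n}. (a k - b k)\<^sup>2 = 0"
    by (subst (asm) sum_nonneg_eq_0_iff) auto
  then show ?thesis using assms(3) by simp
qed

section \<open>Existence of the singular value decomposition\<close>

text \<open>Vectors are functions \<open>nat \<Rightarrow> real\<close>, so that the product topology makes the spheres
  below compact; only the first \<open>m\<close> coordinates of a vector of \<open>\<real>\<^sup>m\<close> are meaningful.\<close>

definition vdot :: "nat \<Rightarrow> (nat \<Rightarrow> real) \<Rightarrow> (nat \<Rightarrow> real) \<Rightarrow> real" where
  "vdot m x y = (\<Sum>i<m. x i * y i)"

definition basis_vec :: "nat \<Rightarrow> nat \<Rightarrow> real" where
  "basis_vec k i = (if i = k then 1 else 0)"

definition tail_sphere :: "nat \<Rightarrow> nat \<Rightarrow> (nat \<Rightarrow> real) set" where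
  "tail_sphere m k = {x. (\<forall>i. i < k \<or> m \<le> i \<longrightarrow> x i = 0) \<and> vdot m x x = 1}"

definition mat_app :: "real mat \<Rightarrow> (nat \<Rightarrow> real) \<Rightarrow> nat \<Rightarrow> real" where
  "mat_app A x i = (if i < dim_row A then \<Sum>j<dim_col A. A $$ (i, j) * x j else 0)"

definition bilin :: "real mat \<Rightarrow> (nat \<Rightarrow> real) \<Rightarrow> (nat \<Rightarrow> real) \<Rightarrow> real" where
  "bilin B x y = (\<Sum>i<dim_row B. \<Sum>j<dim_col B. x i * B $$ (i, j) * y j)"

lemma vdot_basis_vec: "k < m \<Longrightarrow> vdot m (basis_vec k) x = x k"
proof -
  have "vdot m (basis_vec k) x = (\<Sum>i<m. if i = k then x i else 0)"
    unfolding vdot_def basis_vec_def by (intro sum.cong) auto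
  then show "k < m \<Longrightarrow> vdot m (basis_vec k) x = x k" by simp
qed

lemma basis_vec_in_tail_sphere: "k \<le> i \<Longrightarrow> i < m \<Longrightarrow> basis_vec i \<in> tail_sphere m k"
  by (auto simp: tail_sphere_def vdot_basis_vec) (auto simp: basis_vec_def)

lemma uminus_in_tail_sphere: "x \<in> tail_sphere m k \<Longrightarrow> - x \<in> tail_sphere m k"
  by (simp add: tail_sphere_def vdot_def)

lemma tail_sphere_coord_bound:
  assumes "x \<in> tail_sphere m k"
  shows "\<bar>x i\<bar> \<le> 1"
proof (cases "i < m")
  case True
  have "(x i)\<^sup>2 \<le> (\<Sum>l<m. (x l)\<^sup>2)"
    by (rule member_le_sum) (use True in auto)
  then have "(x i)\<^sup>2 \<le> 1" using assms by (simp add: tail_sphere_def vdot_def power2_eq_square)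
  then show ?thesis by (simp add: abs_square_le_1)
qed (use assms in \<open>simp add: tail_sphere_def\<close>)

lemma closed_tail_sphere: "closed (tail_sphere m k)"
proof -
  have "closed {x::nat \<Rightarrow> real. (i < k \<or> m \<le> i) \<longrightarrow> x i = 0}" for i
    by (cases "i < k \<or> m \<le> i") (auto intro: closed_Collect_eq continuous_intros)
  then have "closed {x::nat \<Rightarrow> real. \<forall>i. (i < k \<or> m \<le> i) \<longrightarrow> x i = 0}"
    by (rule closed_Collect_all)
  moreover have "closed {x::nat \<Rightarrow> real. vdot m x x = 1}"
    unfolding vdot_def by (intro closed_Collect_eq continuous_intros) simp_all
  ultimately show ?thesis
    by (simp add: tail_sphere_def Collect_conj_eq closed_Int)
qed

lemma compact_tail_sphere: "compact (tail_sphere m k)"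
proof -
  have "compact (Pi\<^sub>E UNIV (\<lambda>i. {-1..1::real}))"
    using compactin_PiE[of "\<lambda>i. euclidean" UNIV "\<lambda>i. {-1..1::real}"]
    by (simp add: euclidean_product_topology)
  then have "compact (Pi\<^sub>E UNIV (\<lambda>i. {-1..1::real}) \<inter> tail_sphere m k)"
    using closed_tail_sphere by (rule compact_Int_closed)
  moreover have "Pi\<^sub>E UNIV (\<lambda>i. {-1..1::real}) \<inter> tail_sphere m k = tail_sphere m k"
    using tail_sphere_coord_bound by (auto simp: abs_le_iff)
  ultimately show ?thesis by simp
qed

lemma bilin_attains_max_on_tail_spheres:
  assumes "k < m" "k < n"
  obtains u v where "u \<in> tail_sphere m k" "v \<in> tail_sphere n k"
    "\<forall>x\<in>tail_sphere m k. \<forall>y\<in>tail_sphere n k. bilin B x y \<le> bilin B u v"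
proof -
  let ?S = "tail_sphere m k \<times> tail_sphere n k"
  have "(basis_vec k, basis_vec k) \<in> ?S" using assms by (auto intro: basis_vec_in_tail_sphere)
  moreover have "continuous_on ?S (\<lambda>p. bilin B (fst p) (snd p))"
    unfolding bilin_def by (intro continuous_intros continuous_on_product_then_coordinatewise)
  ultimately obtain p where "p \<in> ?S" "\<forall>q\<in>?S. bilin B (fst q) (snd q) \<le> bilin B (fst p) (snd p)"
    using continuous_attains_sup[of ?S] compact_Times[OF compact_tail_sphere compact_tail_sphere]
    by blast
  then show ?thesis using that[of "fst p" "snd p"] by auto
qed

lemma tail_sphere_maximiser_parallel:
  assumes u: "u \<in> tail_sphere m k" and w: "\<forall>j<k. w j = 0"
    and max: "\<forall>x\<in>tail_sphere m k. vdot m x w \<le> \<sigma>" and uw: "vdot m u w = \<sigma>"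
  shows "\<forall>j<m. w j = \<sigma> * u j"
proof -
  have ww: "vdot m w w \<le> \<sigma>\<^sup>2"
  proof (cases "vdot m w w = 0")
    case False
    define c where "c = sqrt (vdot m w w)"
    have "0 \<le> vdot m w w" by (simp add: vdot_def sum_nonneg)
    then have c: "0 < c" "c * c = vdot m w w" using False by (auto simp: c_def)
    define x where "x i = (if i < k \<or> m \<le> i then 0 else w i / c)" for i
    have xw: "\<forall>i<m. x i = w i / c" using w by (auto simp: x_def)
    have "vdot m x x = vdot m w w / (c * c)" and xw_dot: "vdot m x w = vdot m w w / c"
      using xw by (simp_all add: vdot_def sum_divide_distrib)
    then have "x \<in> tail_sphere m k" using c False by (auto simp: tail_sphere_def x_def)
    then have "vdot m x w \<le> \<sigma>" using max by blast
    then have "c * c \<le> \<sigma> * c" using c xw_dot by (simp add: field_simps)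
    then have "c \<le> \<sigma>" using c(1) by simp
    then have "c * c \<le> \<sigma> * \<sigma>" using c(1) by (intro mult_mono) auto
    then show ?thesis using c(2) by (simp add: power2_eq_square)
  qed simp
  have "(\<Sum>j<m. (w j - \<sigma> * u j)\<^sup>2) = (\<Sum>j<m. w j * w j - 2 * \<sigma> * (u j * w j) + \<sigma>\<^sup>2 * (u j * u j))"
    by (intro sum.cong refl) (simp add: power2_eq_square algebra_simps)
  also have "\<dots> = vdot m w w - 2 * \<sigma> * vdot m u w + \<sigma>\<^sup>2 * vdot m u u"
    by (simp add: vdot_def sum.distrib sum_subtractf sum_distrib_left)
  also have "\<dots> \<le> 0" using ww uw u by (simp add: tail_sphere_def power2_eq_square)
  finally have "(\<Sum>j<m. (w j - \<sigma> * u j)\<^sup>2) = 0" by (simp add: order_antisym sum_nonneg)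
  then show ?thesis by (subst (asm) sum_nonneg_eq_0_iff) auto
qed

lemma index_transpose_mult_mult:
  assumes P: "P \<in> carrier_mat m m" and B: "B \<in> carrier_mat m n" and Q: "Q \<in> carrier_mat n n"
    and i: "i < m" and j: "j < n"
  shows "(transpose_mat P * B * Q) $$ (i, j) = (\<Sum>a<m. \<Sum>b<n. P $$ (a, i) * B $$ (a, b) * Q $$ (b, j))"
proof -
  have "(transpose_mat P * B * Q) $$ (i, j) = (\<Sum>b<n. (transpose_mat P * B) $$ (i, b) * Q $$ (b, j))"
    using assms by (intro index_mult_mat_sum[of _ m n _ n]) auto
  also have "\<dots> = (\<Sum>b<n. (\<Sum>a<m. P $$ (a, i) * B $$ (a, b)) * Q $$ (b, j))"
    using assms by (intro sum.cong) (auto simp del: index_mult_mat(1) simp: index_transpose_mult_sum)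
  also have "\<dots> = (\<Sum>a<m. \<Sum>b<n. P $$ (a, i) * B $$ (a, b) * Q $$ (b, j))"
    by (subst sum.swap) (simp add: sum_distrib_right)
  finally show ?thesis .
qed

lemma bilin_transpose_mult_mult:
  assumes P: "P \<in> carrier_mat m m" and B: "B \<in> carrier_mat m n" and Q: "Q \<in> carrier_mat n n"
  shows "bilin (transpose_mat P * B * Q) x y = bilin B (mat_app P x) (mat_app Q y)"
proof -
  have "bilin (transpose_mat P * B * Q) x y
      = (\<Sum>i<m. \<Sum>j<n. x i * (\<Sum>a<m. \<Sum>b<n. P $$ (a, i) * B $$ (a, b) * Q $$ (b, j)) * y j)"
    unfolding bilin_def using assms
    by (intro sum.cong) (auto simp del: assoc_mult_mat index_mult_mat(1) simp: index_transpose_mult_mult)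
  also have "\<dots> = (\<Sum>i<m. \<Sum>j<n. \<Sum>a<m. \<Sum>b<n. x i * P $$ (a, i) * B $$ (a, b) * Q $$ (b, j) * y j)"
    by (simp add: sum_distrib_left sum_distrib_right mult_ac)
  also have "\<dots> = (\<Sum>a<m. \<Sum>b<n. \<Sum>i<m. \<Sum>j<n. x i * P $$ (a, i) * B $$ (a, b) * Q $$ (b, j) * y j)"
    by (rule sum_swap_outer_pair)
  also have "\<dots> = (\<Sum>a<m. \<Sum>b<n. (\<Sum>i<m. P $$ (a, i) * x i) * B $$ (a, b) * (\<Sum>j<n. Q $$ (b, j) * y j))"
    by (simp add: sum_distrib_left sum_distrib_right mult_ac)
  also have "\<dots> = bilin B (mat_app P x) (mat_app Q y)"
    unfolding bilin_def mat_app_def using assms by (intro sum.cong refl) auto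
  finally show ?thesis .
qed

lemma bilin_eq_vdot_left: "B \<in> carrier_mat m n \<Longrightarrow> bilin B x y = vdot m x (mat_app B y)"
  unfolding bilin_def vdot_def mat_app_def by (auto simp: sum_distrib_left mult_ac intro!: sum.cong)

lemma bilin_eq_vdot_right: "B \<in> carrier_mat m n \<Longrightarrow> bilin B x y = vdot n y (mat_app (transpose_mat B) x)"
  unfolding bilin_def vdot_def mat_app_def
  by (subst sum.swap) (auto simp: sum_distrib_left mult_ac intro!: sum.cong)

lemma bilin_basis_vec:
  assumes B: "B \<in> carrier_mat m n" and i: "i < m" and j: "j < n"
  shows "bilin B (basis_vec i) (basis_vec j) = B $$ (i, j)"
proof -
  have "mat_app B (basis_vec j) i = (\<Sum>l<n. B $$ (i, l) * basis_vec j l)"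
    using B i by (simp add: mat_app_def)
  also have "\<dots> = (\<Sum>l<n. if l = j then B $$ (i, l) else 0)"
    by (intro sum.cong) (auto simp: basis_vec_def)
  finally have "mat_app B (basis_vec j) i = B $$ (i, j)" using j by simp
  then show ?thesis using B i by (simp add: bilin_eq_vdot_left vdot_basis_vec)
qed

lemma bilin_uminus_right: "bilin B x (- y) = - bilin B x y"
  by (simp add: bilin_def sum_negf)

lemma vdot_mat_app_orthogonal:
  assumes H: "orthogonal_mat m H"
  shows "vdot m (mat_app H x) (mat_app H x) = vdot m x x"
proof -
  have Hc: "H \<in> carrier_mat m m" using H by (rule orthogonal_mat_carrier)
  have "vdot m (mat_app H x) (mat_app H x)
      = (\<Sum>r<m. \<Sum>l<m. \<Sum>l'<m. x l * x l' * (H $$ (r, l) * H $$ (r, l')))"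
    unfolding vdot_def mat_app_def using Hc by (simp add: sum_product mult_ac)
  also have "\<dots> = (\<Sum>l<m. \<Sum>l'<m. x l * x l' * (\<Sum>r<m. H $$ (r, l) * H $$ (r, l')))"
    by (subst sum.swap, rule sum.cong[OF refl], subst sum.swap) (simp add: sum_distrib_left)
  also have "\<dots> = vdot m x x"
    unfolding vdot_def by (simp add: orthogonal_mat_cols[OF H] if_distrib cong: if_cong)
  finally show ?thesis .
qed

lemma mat_app_in_tail_sphere:
  assumes H: "orthogonal_mat m H" and fix_rows: "\<forall>r<k. \<forall>l<m. H $$ (r, l) = (if r = l then 1 else 0)"
    and x: "x \<in> tail_sphere m k"
  shows "mat_app H x \<in> tail_sphere m k"
proof -
  have Hc: "H \<in> carrier_mat m m" using H by (rule orthogonal_mat_carrier)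
  have "mat_app H x r = 0" if "r < k" "r < m" for r
  proof -
    have "mat_app H x r = (\<Sum>l<m. H $$ (r, l) * x l)"
      using Hc that by (simp add: mat_app_def)
    also have "\<dots> = (\<Sum>l<m. if l = r then x l else 0)"
      using fix_rows that by (intro sum.cong) auto
    finally show ?thesis using x that by (simp add: tail_sphere_def)
  qed
  then show ?thesis
    using vdot_mat_app_orthogonal[OF H] x Hc by (auto simp: tail_sphere_def mat_app_def)
qed

text \<open>For \<open>w = 0\<close> the junk value \<open>2 / 0 = 0\<close> makes this the identity.\<close>

definition householder :: "nat \<Rightarrow> (nat \<Rightarrow> real) \<Rightarrow> real mat" where
  "householder m w = mat m m (\<lambda>(i, j). (if i = j then 1 else 0) - 2 / vdot m w w * w i * w j)"

lemma householder_carrier [simp]: "householder m w \<in> carrier_mat m m"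
  by (simp add: householder_def)

lemma orthogonal_householder: "orthogonal_mat m (householder m w)"
proof -
  define c where "c = 2 / vdot m w w"
  define d where "d i l = (if i = l then 1 else (0::real))" for i l :: nat
  have c: "c * c * vdot m w w = 2 * c" by (cases "vdot m w w = 0") (auto simp: c_def)
  have H: "householder m w $$ (i, j) = d i j - c * w i * w j"
    and HT: "transpose_mat (householder m w) $$ (j, i) = d i j - c * w i * w j"
    if "i < m" "j < m" for i j
    using that by (simp_all add: householder_def c_def d_def)
  have d_mult: "(\<Sum>l<m. d i l * f l) = f i" if "i < m" for i f
  proof -
    have "(\<Sum>l<m. d i l * f l) = (\<Sum>l<m. if l = i then f l else 0)"
      by (intro sum.cong) (auto simp: d_def)
    then show ?thesis using that by simp
  qed
  have "(householder m w * transpose_mat (householder m w)) $$ (i, j) = d i j"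
    if i: "i < m" and j: "j < m" for i j
  proof -
    have "(householder m w * transpose_mat (householder m w)) $$ (i, j)
        = (\<Sum>l<m. (d i l - c * w i * w l) * (d j l - c * w j * w l))"
      using i j by (simp del: index_mult_mat(1) add: index_mult_mat_sum[of _ m m _ m] H HT)
    also have "\<dots> = (\<Sum>l<m. d i l * d j l) - c * w j * (\<Sum>l<m. d i l * w l)
        - c * w i * (\<Sum>l<m. d j l * w l) + c * c * w i * w j * vdot m w w"
      by (simp add: vdot_def algebra_simps sum.distrib sum_subtractf sum_distrib_left)
    also have "\<dots> = d i j + w i * w j * (c * c * vdot m w w - 2 * c)"
      using i j by (simp add: d_mult) (simp add: d_def algebra_simps)
    finally show ?thesis using c by simp
  qed
  then have "householder m w * transpose_mat (householder m w) = 1\<^sub>m m"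
    by (intro eq_matI) (simp_all del: index_mult_mat(1) add: d_def carrier_matD[OF householder_carrier])
  then show ?thesis by (simp add: orthogonal_mat_def)
qed

lemma householder_fixes:
  assumes "w i = 0" "i < m" "j < m"
  shows "householder m w $$ (i, j) = (if i = j then 1 else 0)"
    and "householder m w $$ (j, i) = (if i = j then 1 else 0)"
  using assms by (auto simp: householder_def)

lemma householder_maps_basis_vec:
  assumes u: "vdot m u u = 1" and k: "k < m" and i: "i < m"
  shows "householder m (basis_vec k - u) $$ (i, k) = u i"
proof -
  define w where "w = basis_vec k - u"
  have w: "w l = (if l = k then 1 else 0) - u l" for l by (simp add: w_def basis_vec_def)
  have "vdot m w w = vdot m (basis_vec k) (basis_vec k) - 2 * vdot m (basis_vec k) u + vdot m u u"
    by (simp add: w_def vdot_def algebra_simps sum.distrib sum_subtractf sum_distrib_left)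
  then have S: "vdot m w w = 2 - 2 * u k"
    using u k by (simp add: vdot_basis_vec) (simp add: basis_vec_def)
  have entry: "householder m w $$ (i, k) = (if i = k then 1 else 0) - w i * (2 / vdot m w w * w k)"
    using i k by (simp add: householder_def)
  show ?thesis
  proof (cases "u k = 1")
    case True
    then have "(\<Sum>l<m. (w l)\<^sup>2) = 0" using S by (simp add: vdot_def power2_eq_square)
    then have "w i = 0" using i by (subst (asm) sum_nonneg_eq_0_iff) auto
    then show ?thesis using True entry by (simp add: w w_def[symmetric] split: if_splits)
  next
    case False
    then have "2 / vdot m w w * w k = 1" using S by (simp add: w field_simps)
    then show ?thesis using entry by (simp add: w w_def[symmetric])
  qed
qed

text \<open>The invariant of the greedy construction of an SVD; its second clause is what makes the
  diagonal entries nonnegative and nonincreasing.\<close>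

definition maximal_diagonal_prefix :: "nat \<Rightarrow> nat \<Rightarrow> nat \<Rightarrow> real mat \<Rightarrow> bool" where
  "maximal_diagonal_prefix m n k B \<longleftrightarrow>
    (\<forall>i<m. \<forall>j<n. (i < k \<or> j < k) \<and> i \<noteq> j \<longrightarrow> B $$ (i, j) = 0) \<and>
    (\<forall>i<k. \<forall>x\<in>tail_sphere m i. \<forall>y\<in>tail_sphere n i. bilin B x y \<le> B $$ (i, i))"

lemma maximiser_singular_pair:
  assumes B: "B \<in> carrier_mat m n" and k: "k < m" "k < n"
    and diag: "\<forall>i<m. \<forall>j<n. (i < k \<or> j < k) \<and> i \<noteq> j \<longrightarrow> B $$ (i, j) = 0"
    and u: "u \<in> tail_sphere m k" and v: "v \<in> tail_sphere n k"
    and max: "\<forall>x\<in>tail_sphere m k. \<forall>y\<in>tail_sphere n k. bilin B x y \<le> bilin B u v"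
  shows "\<forall>a<m. mat_app B v a = bilin B u v * u a"
    and "\<forall>b<n. mat_app (transpose_mat B) u b = bilin B u v * v b"
proof -
  have u0: "u j = 0" and v0: "v j = 0" if "j < k" for j
    using u v that by (auto simp: tail_sphere_def)
  show "\<forall>a<m. mat_app B v a = bilin B u v * u a"
  proof (rule tail_sphere_maximiser_parallel[OF u])
    have "B $$ (j, l) * v l = 0" if "j < k" "l < n" for j l
      using diag v0 that k by (cases "j = l") auto
    then show "\<forall>j<k. mat_app B v j = 0"
      using B k by (auto simp: mat_app_def intro!: sum.neutral)
    show "\<forall>x\<in>tail_sphere m k. vdot m x (mat_app B v) \<le> bilin B u v"
      using max v by (simp add: bilin_eq_vdot_left[OF B])
  qed (simp add: bilin_eq_vdot_left[OF B])
  show "\<forall>b<n. mat_app (transpose_mat B) u b = bilin B u v * v b"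
  proof (rule tail_sphere_maximiser_parallel[OF v])
    have "B $$ (l, j) * u l = 0" if "j < k" "l < m" for j l
      using diag u0 that k by (cases "j = l") auto
    then show "\<forall>j<k. mat_app (transpose_mat B) u j = 0"
      using B k by (auto simp: mat_app_def intro!: sum.neutral)
    show "\<forall>y\<in>tail_sphere n k. vdot n y (mat_app (transpose_mat B) u) \<le> bilin B u v"
      using max u by (simp add: bilin_eq_vdot_right[OF B])
  qed (simp add: bilin_eq_vdot_right[OF B])
qed

lemma deflation_fixed_entries:
  fixes B H G :: "real mat"
  assumes B: "B \<in> carrier_mat m n" and H: "H \<in> carrier_mat m m" and G: "G \<in> carrier_mat n n"
    and diag: "\<forall>i<m. \<forall>j<n. (i < k \<or> j < k) \<and> i \<noteq> j \<longrightarrow> B $$ (i, j) = 0"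
    and H_fix: "\<forall>a<m. \<forall>i<k. H $$ (a, i) = (if a = i then 1 else 0) \<and> H $$ (i, a) = (if a = i then 1 else 0)"
    and G_fix: "\<forall>b<n. \<forall>j<k. G $$ (b, j) = (if b = j then 1 else 0) \<and> G $$ (j, b) = (if b = j then 1 else 0)"
    and ij: "i < m" "j < n" "i < k \<or> j < k"
  shows "(transpose_mat H * B * G) $$ (i, j) = (if i = j then B $$ (i, i) else 0)"
proof -
  have entry: "(transpose_mat H * B * G) $$ (i, j) = (\<Sum>a<m. \<Sum>b<n. H $$ (a, i) * B $$ (a, b) * G $$ (b, j))"
    by (rule index_transpose_mult_mult[OF H B G ij(1,2)])
  show ?thesis
  proof (cases "i < k")
    case True
    have "(\<Sum>a<m. \<Sum>b<n. H $$ (a, i) * B $$ (a, b) * G $$ (b, j))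
        = (\<Sum>a<m. if a = i then \<Sum>b<n. B $$ (i, b) * G $$ (b, j) else 0)"
    proof -
      have "H $$ (a, i) = (if a = i then 1 else 0)" if "a < m" for a using H_fix True that by blast
      then show ?thesis by (intro sum.cong refl) simp
    qed
    also have "\<dots> = (\<Sum>b<n. B $$ (i, b) * G $$ (b, j))" using ij by simp
    also have "\<dots> = (\<Sum>b<n. if b = i then B $$ (i, i) * G $$ (i, j) else 0)"
      using diag True ij by (intro sum.cong refl) auto
    finally show ?thesis using entry G_fix True ij by auto
  next
    case False
    with ij have jk: "j < k" by simp
    have "(\<Sum>a<m. \<Sum>b<n. H $$ (a, i) * B $$ (a, b) * G $$ (b, j))
        = (\<Sum>a<m. \<Sum>b<n. if b = j then H $$ (a, i) * B $$ (a, j) else 0)"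
    proof -
      have "G $$ (b, j) = (if b = j then 1 else 0)" if "b < n" for b using G_fix jk that by blast
      then show ?thesis by (intro sum.cong refl) simp
    qed
    also have "\<dots> = (\<Sum>a<m. H $$ (a, i) * B $$ (a, j))" using ij by simp
    also have "\<dots> = (\<Sum>a<m. if a = j then H $$ (j, i) * B $$ (j, j) else 0)"
      using diag jk ij by (intro sum.cong refl) auto
    finally show ?thesis using entry H_fix jk ij by auto
  qed
qed

lemma deflation_pivot_entries:
  fixes B H G :: "real mat"
  assumes B: "B \<in> carrier_mat m n" and H: "orthogonal_mat m H" and G: "orthogonal_mat n G"
    and k: "k < m" "k < n"
    and H_col: "\<forall>a<m. H $$ (a, k) = u a" and G_col: "\<forall>b<n. G $$ (b, k) = v b"
    and Bv: "\<forall>a<m. mat_app B v a = \<sigma> * u a"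
    and Bu: "\<forall>b<n. mat_app (transpose_mat B) u b = \<sigma> * v b"
  shows "j < n \<Longrightarrow> (transpose_mat H * B * G) $$ (k, j) = (if k = j then \<sigma> else 0)"
    and "i < m \<Longrightarrow> (transpose_mat H * B * G) $$ (i, k) = (if i = k then \<sigma> else 0)"
proof -
  note Hc = orthogonal_mat_carrier[OF H] and Gc = orthogonal_mat_carrier[OF G]
  assume j: "j < n"
  have "(transpose_mat H * B * G) $$ (k, j) = (\<Sum>a<m. \<Sum>b<n. u a * B $$ (a, b) * G $$ (b, j))"
    using index_transpose_mult_mult[OF Hc B Gc k(1) j] H_col by simp
  also have "\<dots> = (\<Sum>b<n. \<Sum>a<m. u a * B $$ (a, b) * G $$ (b, j))"
    by (rule sum.swap)
  also have "\<dots> = (\<Sum>b<n. (\<Sum>a<m. B $$ (a, b) * u a) * G $$ (b, j))"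
    by (simp add: sum_distrib_left sum_distrib_right mult_ac)
  also have "\<dots> = \<sigma> * (\<Sum>b<n. G $$ (b, k) * G $$ (b, j))"
    using Bu B G_col by (simp add: mat_app_def sum_distrib_left mult_ac)
  finally show "(transpose_mat H * B * G) $$ (k, j) = (if k = j then \<sigma> else 0)"
    using orthogonal_mat_cols[OF G k(2) j] by simp
next
  note Hc = orthogonal_mat_carrier[OF H] and Gc = orthogonal_mat_carrier[OF G]
  assume i: "i < m"
  have "(transpose_mat H * B * G) $$ (i, k) = (\<Sum>a<m. H $$ (a, i) * (\<Sum>b<n. B $$ (a, b) * v b))"
    using index_transpose_mult_mult[OF Hc B Gc i k(2)] G_col by (simp add: sum_distrib_left mult_ac)
  also have "\<dots> = \<sigma> * (\<Sum>a<m. H $$ (a, k) * H $$ (a, i))"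
    using Bv B H_col by (simp add: mat_app_def sum_distrib_left mult_ac)
  finally show "(transpose_mat H * B * G) $$ (i, k) = (if i = k then \<sigma> else 0)"
    using orthogonal_mat_cols[OF H k(1) i] by simp
qed

lemma transpose_mult_mult_reframe:
  fixes U H M V G :: "real mat"
  assumes "U \<in> carrier_mat m m" "H \<in> carrier_mat m m" "M \<in> carrier_mat m n"
    "V \<in> carrier_mat n n" "G \<in> carrier_mat n n"
  shows "transpose_mat (U * H) * M * (V * G) = transpose_mat H * (transpose_mat U * M * V) * G"
proof -
  have "transpose_mat (U * H) * M * (V * G) = transpose_mat H * (transpose_mat U * M) * (V * G)"
    using assms by (simp add: transpose_mult)
  also have "\<dots> = transpose_mat H * (transpose_mat U * M) * V * G"
    using assms by (intro assoc_mult_mat[symmetric, of _ m n]) auto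
  also have "transpose_mat H * (transpose_mat U * M) * V = transpose_mat H * (transpose_mat U * M * V)"
    using assms by (intro assoc_mult_mat[of _ m m _ n]) auto
  finally show ?thesis .
qed

lemma householder_deflator:
  assumes u: "u \<in> tail_sphere m k" and k: "k < m"
  defines "H \<equiv> householder m (basis_vec k - u)"
  shows "orthogonal_mat m H"
    and "\<forall>a<m. \<forall>i<k. H $$ (a, i) = (if a = i then 1 else 0) \<and> H $$ (i, a) = (if a = i then 1 else 0)"
    and "\<forall>a<m. H $$ (a, k) = u a"
  using u k unfolding H_def
  by (auto simp: orthogonal_householder householder_fixes householder_maps_basis_vec basis_vec_def
      tail_sphere_def)

lemma maximal_diagonal_prefix_Suc:
  assumes B: "B \<in> carrier_mat m n" and k: "k < m" "k < n" and pre: "maximal_diagonal_prefix m n k B"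
  obtains H G where "orthogonal_mat m H" "orthogonal_mat n G"
    "maximal_diagonal_prefix m n (Suc k) (transpose_mat H * B * G)"
proof -
  have diag: "\<forall>i<m. \<forall>j<n. (i < k \<or> j < k) \<and> i \<noteq> j \<longrightarrow> B $$ (i, j) = 0"
    and max: "\<forall>i<k. \<forall>x\<in>tail_sphere m i. \<forall>y\<in>tail_sphere n i. bilin B x y \<le> B $$ (i, i)"
    using pre by (simp_all add: maximal_diagonal_prefix_def)
  obtain u v where u: "u \<in> tail_sphere m k" and v: "v \<in> tail_sphere n k"
    and uv_max: "\<forall>x\<in>tail_sphere m k. \<forall>y\<in>tail_sphere n k. bilin B x y \<le> bilin B u v"
    using bilin_attains_max_on_tail_spheres[OF k] .
  define H where "H = householder m (basis_vec k - u)"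
  define G where "G = householder n (basis_vec k - v)"
  note H = householder_deflator[OF u k(1), folded H_def]
  note G = householder_deflator[OF v k(2), folded G_def]
  define B' where "B' = transpose_mat H * B * G"
  have B'_entries: "B' $$ (i, j) = (if i \<noteq> j then 0 else if i = k then bilin B u v else B $$ (i, i))"
    if "i < m" "j < n" "i < Suc k \<or> j < Suc k" for i j
    using that deflation_fixed_entries[OF B orthogonal_mat_carrier[OF H(1)] orthogonal_mat_carrier[OF G(1)]
        diag H(2) G(2)]
      deflation_pivot_entries[OF B H(1) G(1) k H(3) G(3) maximiser_singular_pair[OF B k diag u v uv_max]]
    by (cases "i < k \<or> j < k") (auto simp: B'_def less_Suc_eq)
  have "maximal_diagonal_prefix m n (Suc k) B'"
    unfolding maximal_diagonal_prefix_def
  proof (intro conjI allI impI ballI)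
    show "B' $$ (i, j) = 0" if "i < m" "j < n" "(i < Suc k \<or> j < Suc k) \<and> i \<noteq> j" for i j
      using that by (simp add: B'_entries)
    fix i x y assume i: "i < Suc k" and x: "x \<in> tail_sphere m i" and y: "y \<in> tail_sphere n i"
    have Hx: "mat_app H x \<in> tail_sphere m i" and Gy: "mat_app G y \<in> tail_sphere n i"
      using H(2) G(2) i
      by (auto intro!: mat_app_in_tail_sphere[OF H(1) _ x] mat_app_in_tail_sphere[OF G(1) _ y])
    have "bilin B' x y = bilin B (mat_app H x) (mat_app G y)"
      unfolding B'_def using orthogonal_mat_carrier[OF H(1)] B orthogonal_mat_carrier[OF G(1)]
      by (rule bilin_transpose_mult_mult)
    also have "\<dots> \<le> B' $$ (i, i)"
    proof -
      have "B' $$ (i, i) = (if i = k then bilin B u v else B $$ (i, i))"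
        using B'_entries[of i i] i k by simp
      then show ?thesis using max Hx Gy uv_max i by (cases "i < k") (auto simp: less_Suc_eq)
    qed
    finally show "bilin B' x y \<le> B' $$ (i, i)" .
  qed
  then show ?thesis using that H(1) G(1) by (simp add: B'_def)
qed

lemma maximal_diagonal_prefix_frames_exist:
  assumes M: "M \<in> carrier_mat m n" and "k \<le> min m n"
  shows "\<exists>U V. orthogonal_mat m U \<and> orthogonal_mat n V
    \<and> maximal_diagonal_prefix m n k (transpose_mat U * M * V)"
  using assms(2)
proof (induction k)
  case 0
  show ?case
    using M by (intro exI[of _ "1\<^sub>m m"] exI[of _ "1\<^sub>m n"])
      (simp add: orthogonal_mat_one maximal_diagonal_prefix_def)
next
  case (Suc k)
  then obtain U V where U: "orthogonal_mat m U" and V: "orthogonal_mat n V"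
    and pre: "maximal_diagonal_prefix m n k (transpose_mat U * M * V)" by auto
  have B: "transpose_mat U * M * V \<in> carrier_mat m n"
    using M orthogonal_mat_carrier[OF U] orthogonal_mat_carrier[OF V] by auto
  obtain H G where H: "orthogonal_mat m H" and G: "orthogonal_mat n G"
    and pre': "maximal_diagonal_prefix m n (Suc k) (transpose_mat H * (transpose_mat U * M * V) * G)"
    using maximal_diagonal_prefix_Suc[OF B _ _ pre] Suc.prems by auto
  have "transpose_mat (U * H) * M * (V * G) = transpose_mat H * (transpose_mat U * M * V) * G"
    using U V H G M by (intro transpose_mult_mult_reframe) (auto simp: orthogonal_mat_carrier)
  then show ?case
    using U V H G pre' by (intro exI[of _ "U * H"] exI[of _ "V * G"]) (simp add: orthogonal_mat_mult)
qed

lemma orthogonal_mat_conj_cancel: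
  assumes M: "M \<in> carrier_mat m n" and U: "orthogonal_mat m U" and V: "orthogonal_mat n V"
  shows "U * (transpose_mat U * M * V) * transpose_mat V = M"
proof -
  note Uc = orthogonal_mat_carrier[OF U] and Vc = orthogonal_mat_carrier[OF V]
  have "U * (transpose_mat U * M * V) = U * (transpose_mat U * M) * V"
    using M Uc Vc by (intro assoc_mult_mat[symmetric, of _ m m _ n]) auto
  also have "U * (transpose_mat U * M) = M"
    using M Uc U by (simp add: assoc_mult_mat[symmetric, of _ m m _ m _ n] orthogonal_mat_def)
  finally have "U * (transpose_mat U * M * V) * transpose_mat V = M * (V * transpose_mat V)"
    using M Vc by simp
  then show ?thesis using V M by (simp add: orthogonal_mat_def)
qed

lemma svd_exists:
  assumes M: "M \<in> carrier_mat m n"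
  obtains U s V where "is_svd m n M U s V"
proof -
  obtain U V where U: "orthogonal_mat m U" and V: "orthogonal_mat n V"
    and pre: "maximal_diagonal_prefix m n (min m n) (transpose_mat U * M * V)"
    using maximal_diagonal_prefix_frames_exist[OF M] by blast
  define B where "B = transpose_mat U * M * V"
  have Bc: "B \<in> carrier_mat m n"
    using M orthogonal_mat_carrier[OF U] orthogonal_mat_carrier[OF V] by (auto simp: B_def)
  have "\<forall>i<m. \<forall>j<n. i \<noteq> j \<longrightarrow> B $$ (i, j) = 0"
  proof (intro allI impI)
    fix i j assume ij: "i < m" "j < n" "i \<noteq> j"
    then have "i < min m n \<or> j < min m n" by auto
    then show "B $$ (i, j) = 0" using pre ij unfolding maximal_diagonal_prefix_def B_def by blast
  qed
  moreover have max: "\<forall>i<min m n. \<forall>x\<in>tail_sphere m i. \<forall>y\<in>tail_sphere n i. bilin B x y \<le> B $$ (i, i)"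
    using pre by (simp add: maximal_diagonal_prefix_def B_def)
  define s where "s i = B $$ (i, i)" for i
  ultimately have "B = rdiag m n s"
    using Bc by (intro eq_matI) (auto simp: rdiag_def s_def)
  then have "M = U * rdiag m n s * transpose_mat V"
    using orthogonal_mat_conj_cancel[OF M U V] by (simp add: B_def)
  moreover have "0 \<le> s i" if i: "i < min m n" for i
  proof -
    have "basis_vec i \<in> tail_sphere m i" "- basis_vec i \<in> tail_sphere n i"
      using i by (auto intro: basis_vec_in_tail_sphere uminus_in_tail_sphere)
    then have "bilin B (basis_vec i) (- basis_vec i) \<le> B $$ (i, i)" using max i by blast
    then show ?thesis using bilin_basis_vec[OF Bc, of i i] i by (simp add: bilin_uminus_right s_def)
  qed
  moreover have "s j \<le> s i" if ij: "i \<le> j" "j < min m n" for i j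
  proof -
    have "basis_vec j \<in> tail_sphere m i" "basis_vec j \<in> tail_sphere n i"
      using ij by (auto intro: basis_vec_in_tail_sphere)
    then have "bilin B (basis_vec j) (basis_vec j) \<le> B $$ (i, i)" using max ij by auto
    then show ?thesis using bilin_basis_vec[OF Bc, of j j] ij by (simp add: s_def)
  qed
  ultimately have "is_svd m n M U s V" using M U V by (auto simp: is_svd_def)
  then show ?thesis by (rule that)
qed

lemma sing_vals_eq:
  assumes svd: "is_svd m n M U s V" and i: "i < min m n"
  shows "sing_vals M i = s i"
proof -
  have M: "M \<in> carrier_mat m n" using is_svdD(1)[OF svd] .
  let ?P = "\<lambda>s'. (\<forall>i \<ge> min m n. s' i = 0) \<and> (\<exists>U V. is_svd m n M U s' V)"
  define s0 where "s0 i = (if i < min m n then s i else 0)" for i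
  have "is_svd m n M U s0 V"
    using svd rdiag_cong[of m n s0 s] by (auto simp: is_svd_def s0_def)
  then have "?P s0" by (auto simp: s0_def)
  then have "?P (sing_vals M)"
    unfolding sing_vals_def using M by (simp add: someI[of ?P])
  then show ?thesis using is_svd_diag_unique[OF _ svd i] by blast
qed

lemma is_svd_sing_vals:
  assumes "M \<in> carrier_mat m n"
  obtains U V where "is_svd m n M U (sing_vals M) V"
proof -
  obtain U s V where svd: "is_svd m n M U s V" using svd_exists[OF assms] .
  then have "is_svd m n M U (sing_vals M) V"
    using rdiag_cong[of m n "sing_vals M" s] sing_vals_eq[OF svd] by (auto simp: is_svd_def)
  then show ?thesis by (rule that)
qed

section \<open>The proximal problem\<close>

definition nonneg_nonincreasing :: "nat \<Rightarrow> nat \<Rightarrow> (nat \<Rightarrow> real) \<Rightarrow> bool" where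
  "nonneg_nonincreasing r K d \<longleftrightarrow>
     (\<forall>i\<in>{r..<K}. 0 \<le> d i) \<and> (\<forall>i j. r \<le> i \<and> i \<le> j \<and> j < K \<longrightarrow> d j \<le> d i)"

definition tail_objective :: "real \<Rightarrow> real \<Rightarrow> (nat \<Rightarrow> real) \<Rightarrow> nat set \<Rightarrow> (nat \<Rightarrow> real) \<Rightarrow> real" where
  "tail_objective lam p \<sigma> A d = (\<Sum>i\<in>A. lam * d i powr p + 1/2 * (d i - \<sigma> i)\<^sup>2)"

lemma tail_objective_split:
  "tail_objective lam p \<sigma> A d = lam * (\<Sum>i\<in>A. d i powr p) + 1/2 * (\<Sum>i\<in>A. (d i - \<sigma> i)\<^sup>2)"
  by (simp add: tail_objective_def sum.distrib sum_distrib_left)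

lemma is_svd_nonneg_nonincreasing: "is_svd m n M U s V \<Longrightarrow> nonneg_nonincreasing r (min m n) s"
  by (auto simp: is_svd_def nonneg_nonincreasing_def)

lemma prox_term_less_at_target:
  fixes lam p s x :: real
  assumes "0 < lam" "0 < p" "0 \<le> s" "s < x"
  shows "lam * s powr p + 1/2 * (s - s)\<^sup>2 < lam * x powr p + 1/2 * (x - s)\<^sup>2"
proof -
  have "lam * s powr p < lam * x powr p" using assms by (simp add: powr_less_mono2)
  moreover have "0 \<le> 1/2 * (x - s)\<^sup>2" "(s - s)\<^sup>2 = 0" by simp_all
  ultimately show ?thesis by linarith
qed

lemma tail_minimiser_le_target:
  assumes "0 < lam" "0 < p"
    and \<sigma>: "nonneg_nonincreasing r K \<sigma>" and d: "nonneg_nonincreasing r K d"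
    and opt: "\<forall>d'. nonneg_nonincreasing r K d' \<longrightarrow>
      tail_objective lam p \<sigma> {r..<K} d \<le> tail_objective lam p \<sigma> {r..<K} d'"
  shows "\<forall>i\<in>{r..<K}. d i \<le> \<sigma> i"
proof (rule ccontr)
  assume "\<not> (\<forall>i\<in>{r..<K}. d i \<le> \<sigma> i)"
  then obtain j where j: "j \<in> {r..<K}" "\<sigma> j < d j" by force
  define d' where "d' i = min (d i) (\<sigma> i)" for i
  have "nonneg_nonincreasing r K d'"
    using \<sigma> d unfolding nonneg_nonincreasing_def d'_def by (smt (verit))
  then have "tail_objective lam p \<sigma> {r..<K} d \<le> tail_objective lam p \<sigma> {r..<K} d'"
    using opt by blast
  moreover have "tail_objective lam p \<sigma> {r..<K} d' < tail_objective lam p \<sigma> {r..<K} d"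
    unfolding tail_objective_def
  proof (rule sum_strict_mono_ex1)
    have "lam * d' i powr p + 1/2 * (d' i - \<sigma> i)\<^sup>2 \<le> lam * d i powr p + 1/2 * (d i - \<sigma> i)\<^sup>2"
      if "i \<in> {r..<K}" for i
      using prox_term_less_at_target[OF assms(1,2), of "\<sigma> i" "d i"] \<sigma> that
      by (cases "d i \<le> \<sigma> i") (auto simp: d'_def nonneg_nonincreasing_def)
    then show "\<forall>i\<in>{r..<K}. lam * d' i powr p + 1/2 * (d' i - \<sigma> i)\<^sup>2 \<le> lam * d i powr p + 1/2 * (d i - \<sigma> i)\<^sup>2"
      by blast
    show "\<exists>i\<in>{r..<K}. lam * d' i powr p + 1/2 * (d' i - \<sigma> i)\<^sup>2 < lam * d i powr p + 1/2 * (d i - \<sigma> i)\<^sup>2"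
    proof
      have "0 \<le> \<sigma> j" using \<sigma> j(1) by (simp add: nonneg_nonincreasing_def)
      then show "lam * d' j powr p + 1/2 * (d' j - \<sigma> j)\<^sup>2 < lam * d j powr p + 1/2 * (d j - \<sigma> j)\<^sup>2"
        using prox_term_less_at_target[OF assms(1,2) _ j(2)] j(2) by (simp add: d'_def)
    qed (rule j(1))
  qed simp
  ultimately show False by simp
qed

lemma is_svd_replace_tail:
  assumes svd: "is_svd m n Y U \<sigma> V" and d: "nonneg_nonincreasing r (min m n) d"
    and d_le: "\<forall>i\<in>{r..<min m n}. d i \<le> \<sigma> i"
  defines "e \<equiv> \<lambda>i. if i < r then \<sigma> i else d i"
  shows "is_svd m n (U * rdiag m n e * transpose_mat V) U e V"
proof -
  note s = is_svdD[OF svd]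
  have "e j \<le> e i" if "i \<le> j" "j < min m n" for i j
  proof (cases "j < r")
    case False
    then have "d j \<le> \<sigma> i" if "i < r" using d_le s(5) \<open>i \<le> j\<close> \<open>j < min m n\<close> by force
    then show ?thesis using False d that by (auto simp: e_def nonneg_nonincreasing_def)
  qed (use s(5) that in \<open>auto simp: e_def\<close>)
  moreover have "0 \<le> e i" if "i < min m n" for i
    using s(4) d that by (auto simp: e_def nonneg_nonincreasing_def)
  ultimately show ?thesis
    using s(2,3) orthogonal_mat_carrier[OF s(2)] orthogonal_mat_carrier[OF s(3)] by (auto simp: is_svd_def)
qed

lemma prox_objective_same_frame:
  assumes svd: "is_svd m n Y U \<sigma> V" and svd_M: "is_svd m n M U e V"
    and agree: "\<forall>i<trunc_rank \<theta> m n. e i = \<sigma> i"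
  shows "lam * trunc_schatten_pow \<theta> p M + 1/2 * (frob_norm (M - Y))\<^sup>2
    = tail_objective lam p \<sigma> {trunc_rank \<theta> m n..<min m n} e"
proof -
  let ?A = "{trunc_rank \<theta> m n..<min m n}"
  have "dim_row M = m" "dim_col M = n" using is_svdD(1)[OF svd_M] by auto
  then have "trunc_schatten_pow \<theta> p M = (\<Sum>i\<in>?A. e i powr p)"
    unfolding trunc_schatten_pow_def Let_def by (intro sum.cong) (auto simp: sing_vals_eq[OF svd_M])
  moreover have "(frob_norm (M - Y))\<^sup>2 = (\<Sum>i\<in>?A. (e i - \<sigma> i)\<^sup>2)"
  proof -
    have "(frob_norm (M - Y))\<^sup>2 = (\<Sum>i<min m n. (e i - \<sigma> i)\<^sup>2)"
      using frob_norm_diff_same_frame[OF is_svdD(2,3)[OF svd]] is_svdD(6)[OF svd] is_svdD(6)[OF svd_M]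
      by metis
    also have "\<dots> = (\<Sum>i\<in>?A. (e i - \<sigma> i)\<^sup>2)"
      using agree by (intro sum.mono_neutral_right) auto
    finally show ?thesis .
  qed
  ultimately show ?thesis by (simp add: tail_objective_split)
qed

lemma prox_objective_ge_tail_optimum:
  assumes svd: "is_svd m n Y U \<sigma> V" and M: "M \<in> carrier_mat m n"
    and opt: "\<forall>d. nonneg_nonincreasing (trunc_rank \<theta> m n) (min m n) d \<longrightarrow>
      c \<le> tail_objective lam p \<sigma> {trunc_rank \<theta> m n..<min m n} d"
  shows "c \<le> lam * trunc_schatten_pow \<theta> p M + 1/2 * (frob_norm (M - Y))\<^sup>2"
proof -
  let ?A = "{trunc_rank \<theta> m n..<min m n}"
  obtain U' V' where svd_M: "is_svd m n M U' (sing_vals M) V'" using is_svd_sing_vals[OF M] .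
  have "(\<Sum>i\<in>?A. (sing_vals M i - \<sigma> i)\<^sup>2) \<le> (\<Sum>i<min m n. (sing_vals M i - \<sigma> i)\<^sup>2)"
    by (rule sum_mono2) auto
  also have "\<dots> \<le> (frob_norm (M - Y))\<^sup>2"
    by (rule mirsky_inequality[OF svd_M svd])
  finally have "(\<Sum>i\<in>?A. (sing_vals M i - \<sigma> i)\<^sup>2) \<le> (frob_norm (M - Y))\<^sup>2" .
  moreover have "trunc_schatten_pow \<theta> p M = (\<Sum>i\<in>?A. sing_vals M i powr p)"
    using M by (simp add: trunc_schatten_pow_def)
  moreover have "c \<le> tail_objective lam p \<sigma> ?A (sing_vals M)"
    using opt is_svd_nonneg_nonincreasing[OF svd_M] by blast
  ultimately show ?thesis by (simp add: tail_objective_split)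
qed

theorem theorem1:
  fixes m n :: nat and \<theta> p lam :: real and Y U V :: "real mat"
    and \<sigma> \<delta> :: "nat \<Rightarrow> real"
  assumes "m \<ge> 1" "n \<ge> 1"
    and "0 \<le> \<theta>" "\<theta> \<le> 1"
    and "0 < p" "p < 1"
    and "lam > 0"
    and svd: "is_svd m n Y U \<sigma> V"
    and \<delta>_feas: "(\<forall>i\<in>{trunc_rank \<theta> m n..<min m n}. 0 \<le> \<delta> i) \<and>
         (\<forall>i j. trunc_rank \<theta> m n \<le> i \<and> i \<le> j \<and> j < min m n \<longrightarrow> \<delta> j \<le> \<delta> i)"
    and \<delta>_opt: "\<forall>\<delta>'. ((\<forall>i\<in>{trunc_rank \<theta> m n..<min m n}. 0 \<le> \<delta>' i) \<and>
         (\<forall>i j. trunc_rank \<theta> m n \<le> i \<and> i \<le> j \<and> j < min m n \<longrightarrow> \<delta>' j \<le> \<delta>' i)) \<longrightarrow>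
         (\<Sum>i\<in>{trunc_rank \<theta> m n..<min m n}. lam * \<delta> i powr p + 1/2 * (\<delta> i - \<sigma> i)\<^sup>2)
           \<le> (\<Sum>i\<in>{trunc_rank \<theta> m n..<min m n}. lam * \<delta>' i powr p + 1/2 * (\<delta>' i - \<sigma> i)\<^sup>2)"
  shows "(\<forall>M \<in> carrier_mat m n.
            lam * trunc_schatten_pow \<theta> p
                 (U * rdiag m n (\<lambda>i. if i < trunc_rank \<theta> m n then \<sigma> i else \<delta> i) * transpose_mat V)
              + 1/2 * (frob_norm
                 (U * rdiag m n (\<lambda>i. if i < trunc_rank \<theta> m n then \<sigma> i else \<delta> i) * transpose_mat V - Y))\<^sup>2
            \<le> lam * trunc_schatten_pow \<theta> p M + 1/2 * (frob_norm (M - Y))\<^sup>2)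
       \<and> (\<forall>i j. i \<le> j \<and> j < min m n \<longrightarrow>
            (if j < trunc_rank \<theta> m n then \<sigma> j else \<delta> j)
              \<le> (if i < trunc_rank \<theta> m n then \<sigma> i else \<delta> i))"
proof -
  let ?r = "trunc_rank \<theta> m n" and ?K = "min m n"
  let ?D = "\<lambda>i. if i < ?r then \<sigma> i else \<delta> i"
  have feas: "nonneg_nonincreasing ?r ?K \<delta>"
    using \<delta>_feas by (simp add: nonneg_nonincreasing_def)
  have opt: "\<forall>d. nonneg_nonincreasing ?r ?K d \<longrightarrow>
      tail_objective lam p \<sigma> {?r..<?K} \<delta> \<le> tail_objective lam p \<sigma> {?r..<?K} d"
    using \<delta>_opt by (simp add: nonneg_nonincreasing_def tail_objective_def)
  have "\<forall>i\<in>{?r..<?K}. \<delta> i \<le> \<sigma> i"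
    using tail_minimiser_le_target[OF \<open>lam > 0\<close> \<open>0 < p\<close> is_svd_nonneg_nonincreasing[OF svd] feas opt] .
  then have svd_opt: "is_svd m n (U * rdiag m n ?D * transpose_mat V) U ?D V"
    by (rule is_svd_replace_tail[OF svd feas])
  have "lam * trunc_schatten_pow \<theta> p (U * rdiag m n ?D * transpose_mat V)
      + 1/2 * (frob_norm (U * rdiag m n ?D * transpose_mat V - Y))\<^sup>2
    = tail_objective lam p \<sigma> {?r..<?K} ?D"
    by (rule prox_objective_same_frame[OF svd svd_opt]) simp
  also have "\<dots> = tail_objective lam p \<sigma> {?r..<?K} \<delta>"
    unfolding tail_objective_def by (intro sum.cong) auto
  finally show ?thesis
    using prox_objective_ge_tail_optimum[OF svd _ opt] is_svdD(5)[OF svd_opt] by auto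
qed

end
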